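(* Every nonempty saturated subspace of an $S^{\ast}$-well-filtered space is $S^{\ast}$-well-filtered.
   Context: All spaces are $T_0$. The specialization order of $X$ is given by $x\le y$ iff $x\in cl(\{y\})$; ${\uparrow}$ is taken with respect to it; a subset is saturated if it equals the intersection of all open sets containing it (equivalently, it is an upper set in the specialization order). $K(X)$ denotes the set of all nonempty compact saturated subsets of $X$; a family in $K(X)$ is filtered if any two members contain a common member. $X$ is $S^{\ast}$-well-filtered if for every filtered family $\{K_i\mid i\in I\}\subseteq K(X)$, every $G\in K(X)$ and every nonempty open $U$, $\bigcap_{i\in I}K_i\cap G\subseteq U$ implies $K_i\cap G\subseteq U$ for some $i$. *)

theory Defs
  imports "HOL-Analysis.Analysis"
begin

definition saturated_in :: "'a topology \<Rightarrow> 'a set \<Rightarrow> bool" where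
  "saturated_in X A \<longleftrightarrow> A \<subseteq> topspace X \<and>
     A = topspace X \<inter> \<Inter>{U. openin X U \<and> A \<subseteq> U}"

definition KX :: "'a topology \<Rightarrow> 'a set set" where
  "KX X = {K. K \<noteq> {} \<and> compactin X K \<and> saturated_in X K}"

definition filtered_KX :: "'a topology \<Rightarrow> 'a set set \<Rightarrow> bool" where
  "filtered_KX X \<K> \<longleftrightarrow> \<K> \<noteq> {} \<and> \<K> \<subseteq> KX X \<and>
     (\<forall>A\<in>\<K>. \<forall>B\<in>\<K>. \<exists>C\<in>\<K>. C \<subseteq> A \<and> C \<subseteq> B)"

definition S_star_well_filtered :: "'a topology \<Rightarrow> bool" where
  "S_star_well_filtered X \<longleftrightarrow>
     (\<forall>\<K> G U. filtered_KX X \<K> \<and> G \<in> KX X \<and> openin X U \<and> U \<noteq> {} \<and>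
        \<Inter>\<K> \<inter> G \<subseteq> U \<longrightarrow> (\<exists>K\<in>\<K>. K \<inter> G \<subseteq> U))"

end

theory Submission
  imports Defs
begin

text \<open>A compact saturated subset K of the saturated subspace Y is compact and saturated in X:
  every point of the X-saturation of K lies in the saturation of Y, which is Y itself, and
  there it meets every trace W \<inter> Y of an open set W \<supseteq> K.  Since moreover every
  open set of Y is such a trace and the set G lies in Y, the defining implication of
  S*-well-filteredness for Y is an instance of the one for X.\<close>

lemma saturated_in_subtopology_imp_saturated_in:
  assumes Y: "saturated_in X Y" and K: "saturated_in (subtopology X Y) K"
  shows "saturated_in X K"
proof -
  have Y_eq: "Y = topspace X \<inter> \<Inter>{W. openin X W \<and> Y \<subseteq> W}"
    using Y by (simp add: saturated_in_def)
  have K_sub: "K \<subseteq> topspace X \<inter> Y"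
    and K_eq: "K = topspace X \<inter> Y \<inter> \<Inter>{U. openin (subtopology X Y) U \<and> K \<subseteq> U}"
    using K by (auto simp: saturated_in_def)
  have "x \<in> K" if x: "x \<in> topspace X" and x_sat: "x \<in> \<Inter>{W. openin X W \<and> K \<subseteq> W}" for x
  proof -
    have "x \<in> Y"
      using x x_sat K_sub by (subst Y_eq) blast
    moreover have "x \<in> U" if "openin (subtopology X Y) U" "K \<subseteq> U" for U
    proof -
      obtain W where W: "openin X W" "U = W \<inter> Y"
        using \<open>openin (subtopology X Y) U\<close> by (auto simp: openin_subtopology)
      with \<open>K \<subseteq> U\<close> x_sat \<open>x \<in> Y\<close> show ?thesis by blast
    qed
    ultimately show "x \<in> K"
      using x by (subst K_eq) blast
  qed
  with K_sub show ?thesis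
    by (auto simp: saturated_in_def)
qed

lemma KX_subtopology_subset:
  assumes "saturated_in X Y"
  shows "KX (subtopology X Y) \<subseteq> KX X"
  using assms saturated_in_subtopology_imp_saturated_in
  by (auto simp: KX_def compactin_subtopology)

lemma filtered_KX_subtopology_imp_filtered_KX:
  assumes "saturated_in X Y" and "filtered_KX (subtopology X Y) \<K>"
  shows "filtered_KX X \<K>"
  using assms KX_subtopology_subset by (fastforce simp: filtered_KX_def)

lemma S_star_well_filtered_subtopology:
  assumes X: "S_star_well_filtered X" and Y: "saturated_in X Y"
  shows "S_star_well_filtered (subtopology X Y)"
  unfolding S_star_well_filtered_def
proof (intro allI impI, elim conjE)
  fix \<K> G U
  assume \<K>: "filtered_KX (subtopology X Y) \<K>" and G: "G \<in> KX (subtopology X Y)"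
    and U: "openin (subtopology X Y) U" "U \<noteq> {}" and meet: "\<Inter>\<K> \<inter> G \<subseteq> U"
  obtain W where W: "openin X W" "U = W \<inter> Y"
    using U by (auto simp: openin_subtopology)
  have G_sub: "G \<subseteq> Y"
    using G by (auto simp: KX_def saturated_in_def)
  have "filtered_KX X \<K>" "G \<in> KX X"
    using \<K> G Y filtered_KX_subtopology_imp_filtered_KX KX_subtopology_subset by blast+
  moreover have "W \<noteq> {}" "\<Inter>\<K> \<inter> G \<subseteq> W"
    using U meet W by auto
  ultimately obtain K where "K \<in> \<K>" "K \<inter> G \<subseteq> W"
    using X W(1) unfolding S_star_well_filtered_def by blast
  with G_sub W(2) show "\<exists>K\<in>\<K>. K \<inter> G \<subseteq> U"
    by blast
qed

theorem mainTheorem15: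
  fixes X :: "'a topology" and Y :: "'a set"
  assumes "t0_space X"
    and "S_star_well_filtered X"
    and "Y \<noteq> {}"
    and "saturated_in X Y"
  shows "S_star_well_filtered (subtopology X Y)"
  using assms(2,4) by (rule S_star_well_filtered_subtopology)

end
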